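(* Let $(a,b)$ be a coprime pair of positive integers. Then: (1) If $A(a,b)=(m,n)$, then $W(a,b)=w(m,n)$, i.e. $W(a,b)=w(A(a,b))$. (2) $A$ is involutive: if $A(a,b)=(m,n)$ then $A(m,n)=(a,b)$. (3) $A$ is symmetric: if $A(a,b)=(m,n)$ then $A(b,a)=(n,m)$. (4) $A(a,1)=(a,1)$, and if $a$ is odd, $A(a,2)=\left(\frac{a+1}{2},\frac{a+3}{2}\right)$.
   Context: For a coprime pair $(a,b)$ of positive integers, set $(a_0,b_0)=(a,b)$, $(m_0,n_0)=(1,1)$, and inductively: if $a_i>b_i$, let $w_{i+1}=L$, $(a_{i+1},b_{i+1})=(a_i-b_i,b_i)$, $(m_{i+1},n_{i+1})=(m_i+n_i,n_i)$; if $a_i<b_i$, let $w_{i+1}=R$, $(a_{i+1},b_{i+1})=(a_i,b_i-a_i)$, $(m_{i+1},n_{i+1})=(m_i,n_i+m_i)$. The process stops at the first $N$ with $(a_N,b_N)=(1,1)$. Define the word $w(a,b)=w_1w_2\cdots w_N$ in the letters $L,R$, the pair $A(a,b)=(m_N,n_N)$, and the reversed word $W(a,b)=W_1\cdots W_N$ with $W_i=w_{N+1-i}$. *)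

theory Defs
  imports Main
begin

datatype letter = L | R

text \<open>The word w(a,b). The process stops at (1,1); the extra guards (a = 0, b = 0, a = b)
  only make the function total and never fire before (1,1) for coprime positive (a,b).\<close>
function wword :: "nat \<Rightarrow> nat \<Rightarrow> letter list" where
  "wword a b =
     (if a = 0 \<or> b = 0 \<or> (a = 1 \<and> b = 1) \<or> a = b then []
      else if a > b then L # wword (a - b) b
      else R # wword a (b - a))"
  by auto
termination by (relation "measure (\<lambda>(a, b). a + b)") auto

function Aiter :: "nat \<Rightarrow> nat \<Rightarrow> nat \<Rightarrow> nat \<Rightarrow> nat \<times> nat" where
  "Aiter a b m n =
     (if a = 0 \<or> b = 0 \<or> (a = 1 \<and> b = 1) \<or> a = b then (m, n)
      else if a > b then Aiter (a - b) b (m + n) n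
      else Aiter a (b - a) m (n + m))"
  by auto
termination by (relation "measure (\<lambda>(a, b, _, _). a + b)") auto

definition Amap :: "nat \<Rightarrow> nat \<Rightarrow> nat \<times> nat" where
  "Amap a b = Aiter a b 1 1"

definition Wword :: "nat \<Rightarrow> nat \<Rightarrow> letter list" where
  "Wword a b = rev (wword a b)"

end

theory Submission
  imports Defs
begin

text \<open>Reading the letters as the maps \<open>L: (x,y) \<mapsto> (x+y,y)\<close> and \<open>R: (x,y) \<mapsto> (x,x+y)\<close>,
  the word \<open>w(a,b)\<close> is the unique word whose composite sends \<open>(1,1)\<close> to \<open>(a,b)\<close>
  (its Stern--Brocot address), while \<open>A(a,b)\<close> is the image of \<open>(1,1)\<close> under the composite
  taken in the opposite order, i.e. the pair addressed by the reversed word \<open>W(a,b)\<close>.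
  This gives (1) at once, (2) because reversing twice is the identity, and (3) because swapping
  both coordinates exchanges \<open>L\<close> and \<open>R\<close>; (4) is a direct computation with the addresses
  \<open>w(a,1) = L\<dots>L\<close> and \<open>w(2k+1,2) = L\<dots>L R\<close>.\<close>

declare wword.simps [simp del] Aiter.simps [simp del]

lemma wword_1_1 [simp]: "wword (Suc 0) (Suc 0) = []"
  by (simp add: wword.simps)

fun letter_step :: "letter \<Rightarrow> nat \<times> nat \<Rightarrow> nat \<times> nat" where
  "letter_step L (x, y) = (x + y, y)"
| "letter_step R (x, y) = (x, x + y)"

fun swap_letter :: "letter \<Rightarrow> letter" where
  "swap_letter L = R"
| "swap_letter R = L"

lemma Aiter_eq_foldr: "Aiter a b m n = foldr letter_step (rev (wword a b)) (m, n)"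
proof (induction a b m n rule: Aiter.induct)
  case (1 a b m n)
  then show ?case
    by (subst Aiter.simps, subst wword.simps) (auto simp: add.commute)
qed

lemma Amap_eq_foldr: "Amap a b = foldr letter_step (rev (wword a b)) (1, 1)"
  by (simp add: Amap_def Aiter_eq_foldr)

lemma foldr_letter_step_pos:
  assumes "x > 0" "y > 0"
  shows "fst (foldr letter_step v (x, y)) > 0 \<and> snd (foldr letter_step v (x, y)) > 0"
proof (induction v)
  case (Cons c v)
  then show ?case
    by (cases c; cases "foldr letter_step v (x, y)") auto
qed (use assms in simp)

lemma wword_foldr_letter_step:
  "wword (fst (foldr letter_step v (1, 1))) (snd (foldr letter_step v (1, 1))) = v"
proof (induction v)
  case (Cons c v)
  obtain x y where xy: "foldr letter_step v (1, 1) = (x, y)"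
    by fastforce
  have "x > 0" "y > 0"
    using foldr_letter_step_pos[of 1 1 v] xy by auto
  then have "wword (x + y) y = L # wword x y" "wword x (x + y) = R # wword x y"
    by (subst wword.simps; simp)+
  with Cons xy show ?case
    by (cases c) auto
qed simp

text \<open>Subtracting the smaller coordinate preserves coprimality, so the guard \<open>a = b\<close>
  of \<open>wword\<close> can only be reached at \<open>(1,1)\<close>.\<close>
lemma foldr_letter_step_wword:
  "a > 0 \<Longrightarrow> b > 0 \<Longrightarrow> coprime a b \<Longrightarrow> foldr letter_step (wword a b) (1, 1) = (a, b)"
proof (induction a b rule: wword.induct)
  case (1 a b)
  consider "a = b" | "a > b" | "a < b"
    by linarith
  then show ?case
  proof cases
    case 1
    with "1.prems" show ?thesis
      by simp
  next
    case 2
    have "coprime (a - b) b"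
      using "1.prems"(3) 2 by (simp add: coprime_iff_gcd_eq_1 gcd_diff1_nat)
    with "1.IH"(1) "1.prems"(1,2) 2 show ?thesis
      by (subst wword.simps) auto
  next
    case 3
    have "coprime a (b - a)"
      using "1.prems"(3) 3 gcd_diff1_nat[of a b] by (metis coprime_iff_gcd_eq_1 gcd.commute less_imp_le)
    with "1.IH"(2) "1.prems"(1,2) 3 show ?thesis
      by (subst wword.simps) auto
  qed
qed

lemma wword_swap: "wword b a = map swap_letter (wword a b)"
proof (induction a b rule: wword.induct)
  case (1 a b)
  then show ?case
    by (subst wword.simps, subst (2) wword.simps) auto
qed

lemma foldr_letter_step_map_swap:
  "foldr letter_step (map swap_letter v) (prod.swap p) = prod.swap (foldr letter_step v p)"
proof (induction v)
  case (Cons c v)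
  then show ?case
    by (cases c; cases "foldr letter_step v p") auto
qed simp

lemma funpow_letter_step_L: "(letter_step L ^^ k) (x, y) = (x + k * y, y)"
  by (induction k) auto

lemma wword_Suc_1: "wword (Suc k) 1 = replicate k L"
  by (induction k) (simp_all add: wword.simps)

lemma wword_odd_2: "wword (2 * k + 1) 2 = replicate k L @ [R]"
proof (induction k)
  case 0
  show ?case
    by (subst wword.simps) simp
next
  case (Suc k)
  have "wword (2 * Suc k + 1) 2 = L # wword (2 * k + 1) 2"
    by (subst wword.simps) auto
  with Suc show ?case
    by simp
qed

theorem lemma2p1:
  fixes a b m n :: nat
  assumes "a > 0" and "b > 0" and "coprime a b"
  shows "(Amap a b = (m, n) \<longrightarrow> Wword a b = wword m n)
       \<and> (Amap a b = (m, n) \<longrightarrow> Amap m n = (a, b))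
       \<and> (Amap a b = (m, n) \<longrightarrow> Amap b a = (n, m))
       \<and> Amap a 1 = (a, 1)
       \<and> (odd a \<longrightarrow> Amap a 2 = ((a + 1) div 2, (a + 3) div 2))"
proof (intro conjI impI)
  assume "Amap a b = (m, n)"
  then have eval: "foldr letter_step (rev (wword a b)) (1, 1) = (m, n)"
    by (simp add: Amap_eq_foldr)
  show W: "Wword a b = wword m n"
    using wword_foldr_letter_step[of "rev (wword a b)"] eval by (simp add: Wword_def)
  show "Amap m n = (a, b)"
    using foldr_letter_step_wword[OF assms] by (simp add: Amap_eq_foldr Wword_def flip: W)
  have "Amap b a = foldr letter_step (map swap_letter (rev (wword a b))) (prod.swap (1, 1))"
    by (simp add: Amap_eq_foldr wword_swap[of b a] rev_map)
  also have "\<dots> = (n, m)"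
    by (simp only: foldr_letter_step_map_swap eval) simp
  finally show "Amap b a = (n, m)" .
next
  obtain k where "a = Suc k"
    using assms(1) not0_implies_Suc by blast
  then show "Amap a 1 = (a, 1)"
    using wword_Suc_1[of k] by (simp add: Amap_eq_foldr funpow_letter_step_L)
next
  assume "odd a"
  then obtain k where k: "a = 2 * k + 1"
    using oddE by blast
  then have "Amap a 2 = (k + 1, k + 2)"
    using wword_odd_2[of k] by (simp add: Amap_eq_foldr funpow_letter_step_L)
  with k show "Amap a 2 = ((a + 1) div 2, (a + 3) div 2)"
    by simp
qed

end
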